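(* Let $n\ge3$ and let $i<j$ be integers with $i\ge-1$. Then for every $b\in\mathcal{N}_i$ and $b'\in\mathcal{N}_j$, the bracket $[b,b']$ is either $0$ or lies in the $\mathbb{Z}$-span $\mathbb{Z}\mathcal{N}_{j-1}$; that is, $[\mathcal{N}_i,\mathcal{N}_j]\subseteq\mathbb{Z}\mathcal{N}_{j-1}\cup\{0\}$.
   Context: Fix an integer $n\ge 3$. A partition is a sequence $\Lambda=(\lambda_j)_{j\ge1}$ of non-negative integers with finite support; $\mathrm{wt}(\Lambda)=\sum_j j\lambda_j$; $\mathrm{Part}(k)$ is the set of partitions with $\lambda_j=0$ for $j>k$. Write $x^\Lambda=\prod_j x_j^{\lambda_j}$, $\deg(x^\Lambda)=\sum_j\lambda_j$, and let $\partial_k$ be the partial derivative with respect to $x_k$. $\mathfrak{L}(n)$ is the free $\mathbb{Z}$-module with basis $\mathcal{B}=\{x^\Lambda\partial_k : 1\le k\le n,\ \Lambda\in\mathrm{Part}(k-1)\}$, a Lie ring with bracket defined on basis elements by $[x^\Lambda\partial_k,x^\Theta\partial_j]=\partial_j(x^\Lambda)x^\Theta\partial_k$ if $j<k$, $-x^\Lambda\partial_k(x^\Theta)\partial_j$ if $j>k$, $0$ if $j=k$, extended bilinearly. For an integer $i\ge-1$, let $r_i\in\{1,\dots,n-1\}$ with $i\equiv r_i\pmod{n-1}$ and $h_i=\lfloor (i-1)/(n-1)\rfloor+1$. Define $\mathrm{WD}(x^\Lambda\partial_k)=\mathrm{wt}(\Lambda)-\deg(x^\Lambda)+n-k$ and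 $\mathrm{lev}_i(x^\Lambda\partial_k)=h_i\,\mathrm{WD}(x^\Lambda\partial_k)+\deg(x^\Lambda)-1$. For $i\ge-1$, $\mathcal{N}_i=\{b\in\mathcal{B}: \mathrm{lev}_j(b)\le j\text{ for some integer } -1\le j\le i\}$; $\mathbb{Z}\mathcal{N}_i$ is its $\mathbb{Z}$-span in $\mathfrak{L}(n)$. *)

theory Defs
  imports Main
begin

text \<open>Partitions are functions nat => nat (index 0 is unused and forced to 0 in Part(k)).
 A basis element x^Lambda d_k is the pair (Lambda, k).
 Elements of L(n) are integer-valued functions on such pairs (coefficient vectors).\<close>

type_synonym partition = "nat \<Rightarrow> nat"
type_synonym bas = "partition \<times> nat"
type_synonym elem = "bas \<Rightarrow> int"

definition part_in :: "nat \<Rightarrow> partition \<Rightarrow> bool" where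
  "part_in k L \<longleftrightarrow> (\<forall>j. (j = 0 \<or> k < j) \<longrightarrow> L j = 0)"

definition wt :: "partition \<Rightarrow> nat" where
  "wt L = (\<Sum>j\<in>{j. L j \<noteq> 0}. j * L j)"

definition deg :: "partition \<Rightarrow> nat" where
  "deg L = (\<Sum>j\<in>{j. L j \<noteq> 0}. L j)"

definition basis :: "nat \<Rightarrow> bas set" where
  "basis n = {(L, k). 1 \<le> k \<and> k \<le> n \<and> part_in (k - 1) L}"

definition delta :: "bas \<Rightarrow> elem" where
  "delta b = (\<lambda>c. if c = b then 1 else 0)"

definition br_basis :: "bas \<Rightarrow> bas \<Rightarrow> elem" where
  "br_basis b b' = (case b of (L, k) \<Rightarrow> case b' of (T, j) \<Rightarrow>
     if j < k then (\<lambda>c. int (L j) * delta (\<lambda>m. (L(j := L j - 1)) m + T m, k) c)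
     else if k < j then (\<lambda>c. - int (T k) * delta (\<lambda>m. L m + (T(k := T k - 1)) m, j) c)
     else (\<lambda>c. 0))"

definition bracket :: "elem \<Rightarrow> elem \<Rightarrow> elem" where
  "bracket x y = (\<lambda>c. \<Sum>b\<in>{b. x b \<noteq> 0}. \<Sum>b'\<in>{b'. y b' \<noteq> 0}. x b * y b' * br_basis b b' c)"

definition WD :: "nat \<Rightarrow> bas \<Rightarrow> int" where
  "WD n b = (case b of (L, k) \<Rightarrow> int (wt L) - int (deg L) + int n - int k)"

definition h :: "nat \<Rightarrow> int \<Rightarrow> int" where
  "h n i = (i - 1) div (int n - 1) + 1"

definition lev :: "nat \<Rightarrow> int \<Rightarrow> bas \<Rightarrow> int" where
  "lev n i b = h n i * WD n b + int (deg (fst b)) - 1"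

definition NN :: "nat \<Rightarrow> int \<Rightarrow> bas set" where
  "NN n i = {b \<in> basis n. \<exists>j::int. -1 \<le> j \<and> j \<le> i \<and> lev n j b \<le> j}"

definition zspan :: "bas set \<Rightarrow> elem set" where
  "zspan S = {x. \<exists>F c. finite F \<and> F \<subseteq> S \<and> x = (\<lambda>d. \<Sum>b\<in>F. c b * delta b d)}"

end

theory Submission
  imports Defs
begin

(* A nonzero bracket of basis elements b = x^L d_k and b' = x^T d_r is an integer multiple of a
   single basis element c (differentiate one monomial, multiply by the other), so
   WD c = WD b + WD b' - (n - 1) and deg c = deg b + deg b' - 1.  As h_i = ceil (i / (n - 1)),
   the level conditions lev_p b <= p and lev_q b' <= q then give lev_m c <= m for
   m = max p (q - 1) <= j - 1 by integer arithmetic, using that WD <= n - 1 for every basis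
   element satisfying a level condition.  The one delicate case, WD b' = 0, forces
   b' = x_1^a d_n and then b = d_1. *)

(* ceil_div N x is the ceiling of x / N, so h n = ceil_div (n - 1). *)
definition ceil_div :: "int \<Rightarrow> int \<Rightarrow> int" where
  "ceil_div N x = (x - 1) div N + 1"

lemma le_mult_ceil_div:
  fixes N x :: int
  assumes "0 < N"
  shows "x \<le> N * ceil_div N x"
proof -
  have "N * ((x - 1) div N) + (x - 1) mod N = x - 1" by (rule mult_div_mod_eq)
  moreover have "(x - 1) mod N < N" using assms by simp
  ultimately show ?thesis unfolding ceil_div_def distrib_left by linarith
qed

lemma ceil_div_mono:
  fixes N x y :: int
  assumes "0 < N" "x \<le> y"
  shows "ceil_div N x \<le> ceil_div N y"
  using assms by (simp add: ceil_div_def zdiv_mono1)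

lemma ceil_div_nonneg:
  fixes N x :: int
  assumes "0 < N" "- N < x"
  shows "0 \<le> ceil_div N x"
proof (rule ccontr)
  assume "\<not> 0 \<le> ceil_div N x"
  then have "N * ceil_div N x \<le> N * (- 1)"
    using assms(1) by (intro mult_left_mono) auto
  then show False using le_mult_ceil_div[OF assms(1), of x] assms(2) by simp
qed

lemma ceil_div_succ:
  fixes N x :: int
  assumes "0 < N" "x = N * ceil_div N x"
  shows "ceil_div N (x + 1) = ceil_div N x + 1"
proof -
  have "ceil_div N (x + 1) = x div N + 1" by (simp add: ceil_div_def)
  also have "x div N = ceil_div N x" using assms by (metis nonzero_mult_div_cancel_left less_irrefl)
  finally show ?thesis .
qed

(* Below, N = n - 1, (A, d) and (B, e) are WD and deg of two basis elements satisfying the level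
   conditions at p and q, and (A + B - N, d + e - 1) are WD and deg of their bracket. *)
lemma weight_le_of_level:
  fixes N A d p :: int
  assumes N: "2 \<le> N" and p: "-1 \<le> p" and d: "0 \<le> d" "d = 0 \<Longrightarrow> A \<le> N" "d = 1 \<Longrightarrow> A < N"
    and lev: "ceil_div N p * A + d - 1 \<le> p"
  shows "A \<le> N"
proof (rule ccontr)
  assume "\<not> A \<le> N"
  then have "0 \<le> ceil_div N p * (A - N)"
    using ceil_div_nonneg[of N p] N p by simp
  then have "d \<le> 1"
    using lev le_mult_ceil_div[of N p] N by (simp add: algebra_simps)
  then have "d = 0 \<or> d = 1" using d(1) by linarith
  then show False using d \<open>\<not> A \<le> N\<close> by auto
qed

lemma level_merge_left:
  fixes N A B d e p q :: int
  assumes N: "0 < N" and B: "0 \<le> B" "B \<le> N" and qp: "q - 1 \<le> p"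
    and B0: "B = 0 \<Longrightarrow> d = 0 \<and> A = N"
    and Hp: "ceil_div N p * A + d - 1 \<le> p" and Hq: "ceil_div N q * B + e - 1 \<le> q"
  shows "ceil_div N p * (A + B - N) + (d + e - 1) - 1 \<le> p"
proof (cases "B = 0")
  case True
  then show ?thesis using B0 Hq qp le_mult_ceil_div[OF N, of q] by simp
next
  case False
  define s t where "s = ceil_div N p" and "t = ceil_div N q"
  have ps: "p \<le> N * s" and qt: "q \<le> N * t"
    unfolding s_def t_def using le_mult_ceil_div[OF N] by auto
  have "s * B + e - 1 \<le> N * s"
  proof (cases "t < s")
    case True
    have "s * (B - N) \<le> t * (B - N)"
      using True B by (intro mult_right_mono_neg) auto
    then show ?thesis using Hq qt unfolding t_def[symmetric] by (simp add: algebra_simps)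
  next
    case False
    then have sBq: "s * B + e - 1 \<le> q"
      using Hq B mult_right_mono[of s t B] unfolding t_def[symmetric] by simp
    show ?thesis
    proof (cases "q \<le> N * s")
      case False
      then have "p = N * s" and q: "q = p + 1" using qp ps by auto
      then have "t = s + 1" unfolding t_def s_def using ceil_div_succ[OF N] by simp
      then show ?thesis using Hq q \<open>p = N * s\<close> \<open>B \<noteq> 0\<close> B
        unfolding t_def[symmetric] by (simp add: algebra_simps)
    qed (use sBq in simp)
  qed
  then show ?thesis using Hp unfolding s_def[symmetric] by (simp add: algebra_simps)
qed

lemma level_merge_right:
  fixes N A B d e p q :: int
  assumes N: "0 < N" and B: "0 \<le> B" and A: "A \<le> N" "d = 1 \<Longrightarrow> A < N" and pq: "p < q - 1"
    and Hp: "ceil_div N p * A + d - 1 \<le> p" and Hq: "ceil_div N q * B + e - 1 \<le> q"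
  shows "ceil_div N (q - 1) * (A + B - N) + (d + e - 1) - 1 \<le> q - 1"
proof -
  define r s t where "r = ceil_div N p" and "s = ceil_div N (q - 1)" and "t = ceil_div N q"
  have "s \<le> t" unfolding s_def t_def using ceil_div_mono[OF N] by simp
  then have sB: "s * B + e - 1 \<le> q"
    using Hq B mult_right_mono[of s t B] unfolding t_def[symmetric] by simp
  have pr: "p \<le> N * r" and qs: "q - 1 \<le> N * s"
    unfolding r_def s_def using le_mult_ceil_div[OF N] by auto
  have "s * (A - N) + d \<le> 0"
  proof (cases "r = s")
    case True
    then show ?thesis using Hp pq qs unfolding r_def[symmetric] by (simp add: algebra_simps)
  next
    case False
    then have "r + 1 \<le> s" using ceil_div_mono[OF N, of p "q - 1"] pq unfolding r_def s_def by simp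
    then have "s * (A - N) \<le> (r + 1) * (A - N)"
      using A by (intro mult_right_mono_neg) auto
    then have "s * (A - N) + d \<le> 1 + A - N"
      using Hp pr unfolding r_def[symmetric] by (simp add: algebra_simps)
    moreover have "d \<noteq> 1" if "A = N" using A(2) that by blast
    ultimately show ?thesis using A(1) by (cases "A = N") auto
  qed
  then show ?thesis using sB unfolding s_def[symmetric] by (simp add: algebra_simps)
qed

lemma level_merge:
  fixes N A B d e p q :: int
  assumes N: "2 \<le> N" and p: "-1 \<le> p" and q: "-1 \<le> q"
    and A: "0 \<le> d" "d = 0 \<Longrightarrow> A \<le> N" "d = 1 \<Longrightarrow> A < N"
    and B: "0 \<le> B" "0 \<le> e" "e = 0 \<Longrightarrow> B \<le> N" "e = 1 \<Longrightarrow> B < N"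
    and B0: "B = 0 \<Longrightarrow> d = 0 \<and> A = N"
    and Hp: "ceil_div N p * A + d - 1 \<le> p" and Hq: "ceil_div N q * B + e - 1 \<le> q"
  shows "ceil_div N (max p (q - 1)) * (A + B - N) + (d + e - 1) - 1 \<le> max p (q - 1)"
proof (cases "q - 1 \<le> p")
  case True
  have "B \<le> N" using weight_le_of_level[OF N q B(2-4) Hq] .
  then show ?thesis using level_merge_left[OF _ B(1) _ True B0 Hp Hq] N True by simp
next
  case False
  have "A \<le> N" using weight_le_of_level[OF N p A Hp] .
  then show ?thesis using level_merge_right[OF _ B(1) _ A(3) _ Hp Hq] N False by simp
qed

lemma part_in_mono: "part_in K L \<Longrightarrow> K \<le> K' \<Longrightarrow> part_in K' L"
  unfolding part_in_def by auto

lemma part_in_support: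
  assumes "part_in K L"
  shows "{j. L j \<noteq> 0} \<subseteq> {1..K}"
proof
  fix j
  assume "j \<in> {j. L j \<noteq> 0}"
  then have "j \<noteq> 0" "\<not> K < j" using assms unfolding part_in_def by (metis mem_Collect_eq)+
  then show "j \<in> {1..K}" by simp
qed

lemma wt_eq_sum: "part_in K L \<Longrightarrow> wt L = (\<Sum>j = 1..K. j * L j)"
  unfolding wt_def by (intro sum.mono_neutral_left) (auto dest!: part_in_support)

lemma deg_eq_sum: "part_in K L \<Longrightarrow> deg L = (\<Sum>j = 1..K. L j)"
  unfolding deg_def by (intro sum.mono_neutral_left) (auto dest!: part_in_support)

lemma wt_minus_deg_eq_sum:
  assumes "part_in K L"
  shows "wt L = deg L + (\<Sum>j = 1..K. (j - 1) * L j)"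
proof -
  have "(\<Sum>j = 1..K. j * L j) = (\<Sum>j = 1..K. L j + (j - 1) * L j)"
    by (rule sum.cong) (auto simp: mult_eq_if)
  then show ?thesis using wt_eq_sum[OF assms] deg_eq_sum[OF assms] by (simp add: sum.distrib)
qed

lemma deg_le_wt: "part_in K L \<Longrightarrow> deg L \<le> wt L"
  using wt_minus_deg_eq_sum by fastforce

lemma wt_le_mult_deg: "part_in K L \<Longrightarrow> wt L \<le> K * deg L"
  unfolding wt_eq_sum deg_eq_sum sum_distrib_left by (intro sum_mono) auto

lemma wt_eq_deg_imp_part_eq_1:
  assumes "part_in K L" "wt L = deg L" "0 < L r"
  shows "r = 1"
proof -
  have "r \<in> {1..K}" using part_in_support[OF assms(1)] assms(3) by auto
  then have "(r - 1) * L r \<le> (\<Sum>j = 1..K. (j - 1) * L j)"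
    by (rule member_le_sum) auto
  moreover have "(\<Sum>j = 1..K. (j - 1) * L j) = 0" using wt_minus_deg_eq_sum[OF assms(1)] assms(2) by simp
  ultimately have "(r - 1) * L r = 0" by linarith
  then show ?thesis using assms(3) \<open>r \<in> {1..K}\<close> by simp
qed

lemma part_in_0_wt_deg: "part_in 0 L \<Longrightarrow> wt L = 0 \<and> deg L = 0"
  by (simp add: wt_eq_sum deg_eq_sum)

lemma part_in_add: "part_in K L \<Longrightarrow> part_in K T \<Longrightarrow> part_in K (\<lambda>m. L m + T m)"
  unfolding part_in_def by auto

lemma
  assumes "part_in K L" "part_in K T"
  shows wt_add: "wt (\<lambda>m. L m + T m) = wt L + wt T"
    and deg_add: "deg (\<lambda>m. L m + T m) = deg L + deg T"
  using assms part_in_add[OF assms]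
  by (simp_all add: wt_eq_sum deg_eq_sum sum.distrib add_mult_distrib2)

(* x^(deriv_exp r L T) is d_r(x^L) * x^T up to the factor L r. *)

definition deriv_exp :: "nat \<Rightarrow> partition \<Rightarrow> partition \<Rightarrow> partition" where
  "deriv_exp r L T = (\<lambda>m. (L(r := L r - 1)) m + T m)"

lemma
  assumes L: "part_in K L" and T: "part_in K T" and r: "0 < L r"
  shows part_in_deriv_exp: "part_in K (deriv_exp r L T)"
    and wt_deriv_exp: "wt (deriv_exp r L T) + r = wt L + wt T"
    and deg_deriv_exp: "deg (deriv_exp r L T) + 1 = deg L + deg T"
proof -
  define L' where "L' = L(r := L r - 1)"
  define u :: partition where "u = (\<lambda>m. if m = r then 1 else 0)"
  have "r \<in> {1..K}" using part_in_support[OF L] r by auto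
  then have L': "part_in K L'" and u: "part_in K u"
    using L unfolding L'_def u_def part_in_def by auto
  have "{j. u j \<noteq> 0} = {r}" by (auto simp: u_def)
  then have wt_u: "wt u = r" and deg_u: "deg u = 1" by (simp_all add: wt_def deg_def u_def)
  have L_eq: "L = (\<lambda>m. L' m + u m)" using r by (auto simp: L'_def u_def)
  have M_eq: "deriv_exp r L T = (\<lambda>m. L' m + T m)" by (simp add: deriv_exp_def L'_def)
  show "part_in K (deriv_exp r L T)" unfolding M_eq by (rule part_in_add[OF L' T])
  show "wt (deriv_exp r L T) + r = wt L + wt T"
    unfolding M_eq by (subst L_eq) (simp add: wt_add[OF L' T] wt_add[OF L' u] wt_u)
  show "deg (deriv_exp r L T) + 1 = deg L + deg T"
    unfolding M_eq by (subst L_eq) (simp add: deg_add[OF L' T] deg_add[OF L' u] deg_u)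
qed

lemma WD_deriv_exp:
  assumes "part_in K L" "part_in K T" "0 < L r"
  shows "WD n (deriv_exp r L T, k) + (int n - 1) = WD n (L, k) + WD n (T, r)"
proof -
  have "int (wt (deriv_exp r L T)) + int r = int (wt L) + int (wt T)"
    using wt_deriv_exp[OF assms] by (metis of_nat_add)
  moreover have "int (deg (deriv_exp r L T)) + 1 = int (deg L) + int (deg T)"
    using deg_deriv_exp[OF assms] by (metis of_nat_add of_nat_1)
  ultimately show ?thesis unfolding WD_def by simp
qed

lemma basis_WD_bounds:
  assumes "b \<in> basis n"
  shows "0 \<le> WD n b" and "deg (fst b) = 0 \<Longrightarrow> WD n b \<le> int n - 1"
    and "deg (fst b) = 1 \<Longrightarrow> WD n b < int n - 1"
proof -
  obtain L k where b: "b = (L, k)" "1 \<le> k" "k \<le> n" and L: "part_in (k - 1) L"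
    using assms unfolding basis_def by auto
  show "0 \<le> WD n b" using deg_le_wt[OF L] b by (simp add: WD_def)
  have "wt L \<le> (k - 1) * deg L" by (rule wt_le_mult_deg[OF L])
  then show "deg (fst b) = 0 \<Longrightarrow> WD n b \<le> int n - 1"
    and "deg (fst b) = 1 \<Longrightarrow> WD n b < int n - 1"
    using b by (auto simp: WD_def)
qed

lemma basis_WD_eq_0:
  assumes "(T, r) \<in> basis n" "WD n (T, r) = 0"
  shows "r = n" and "wt T = deg T"
proof -
  have "r \<le> n" "part_in (r - 1) T" using assms(1) unfolding basis_def by auto
  moreover from this have "deg T \<le> wt T" by (simp add: deg_le_wt)
  ultimately show "r = n" "wt T = deg T" using assms(2) unfolding WD_def by auto
qed

lemma bracket_delta: "bracket (delta b) (delta b') = br_basis b b'"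
proof -
  have "{c. delta b c \<noteq> 0} = {b}" for b by (auto simp: delta_def)
  then show ?thesis unfolding bracket_def by (simp add: delta_def)
qed

lemma br_basis_single:
  assumes b: "b \<in> basis n" and b': "b' \<in> basis n" and nonzero: "br_basis b b' \<noteq> (\<lambda>_. 0)"
  obtains c c0 where "br_basis b b' = (\<lambda>d. c * delta c0 d)" and "c0 \<in> basis n"
    and "WD n c0 + (int n - 1) = WD n b + WD n b'"
    and "deg (fst c0) + 1 = deg (fst b) + deg (fst b')"
proof -
  obtain L k T r where bk: "b = (L, k)" and br: "b' = (T, r)" by (cases b, cases b')
  have k: "1 \<le> k" "k \<le> n" and L: "part_in (k - 1) L"
    using b unfolding bk basis_def by auto
  have r: "1 \<le> r" "r \<le> n" and T: "part_in (r - 1) T"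
    using b' unfolding br basis_def by auto
  consider "r < k" | "k < r" | "k = r" by linarith
  then show ?thesis
  proof cases
    case 1
    then have eq: "br_basis b b' = (\<lambda>d. int (L r) * delta (deriv_exp r L T, k) d)"
      by (simp add: bk br br_basis_def deriv_exp_def)
    then have Lr: "0 < L r" using nonzero by auto
    have T': "part_in (k - 1) T" using part_in_mono[OF T] 1 by simp
    show ?thesis
    proof (rule that[OF eq])
      show "(deriv_exp r L T, k) \<in> basis n"
        using part_in_deriv_exp[OF L T' Lr] k by (simp add: basis_def)
      show "WD n (deriv_exp r L T, k) + (int n - 1) = WD n b + WD n b'"
        using WD_deriv_exp[OF L T' Lr] by (simp add: bk br)
      show "deg (fst (deriv_exp r L T, k)) + 1 = deg (fst b) + deg (fst b')"
        using deg_deriv_exp[OF L T' Lr] by (simp add: bk br)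
    qed
  next
    case 2
    then have eq: "br_basis b b' = (\<lambda>d. - int (T k) * delta (deriv_exp k T L, r) d)"
      by (simp add: bk br br_basis_def deriv_exp_def add.commute)
    then have Tk: "0 < T k" using nonzero by auto
    have L': "part_in (r - 1) L" using part_in_mono[OF L] 2 by simp
    show ?thesis
    proof (rule that[OF eq])
      show "(deriv_exp k T L, r) \<in> basis n"
        using part_in_deriv_exp[OF T L' Tk] r by (simp add: basis_def)
      show "WD n (deriv_exp k T L, r) + (int n - 1) = WD n b + WD n b'"
        using WD_deriv_exp[OF T L' Tk] by (simp add: bk br)
      show "deg (fst (deriv_exp k T L, r)) + 1 = deg (fst b) + deg (fst b')"
        using deg_deriv_exp[OF T L' Tk] by (simp add: bk br)
    qed
  next
    case 3
    then show ?thesis using nonzero by (simp add: bk br br_basis_def)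
  qed
qed

lemma br_basis_WD_eq_0:
  assumes b: "b \<in> basis n" and b': "b' \<in> basis n" and nonzero: "br_basis b b' \<noteq> (\<lambda>_. 0)"
    and WD0: "WD n b' = 0"
  shows "deg (fst b) = 0" and "WD n b = int n - 1"
proof -
  obtain L k T r where bk: "b = (L, k)" and br: "b' = (T, r)" by (cases b, cases b')
  have k: "1 \<le> k" "k \<le> n" and L: "part_in (k - 1) L"
    using b unfolding bk basis_def by auto
  have T: "part_in (r - 1) T" using b' unfolding br basis_def by auto
  have "r = n" "wt T = deg T" using basis_WD_eq_0 b' WD0 unfolding br by auto
  moreover have "k \<noteq> r" using nonzero by (auto simp: bk br br_basis_def)
  ultimately have "k < r" using k by simp
  then have "0 < T k" using nonzero by (auto simp: bk br br_basis_def)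
  then have "k = 1" using wt_eq_deg_imp_part_eq_1[OF T \<open>wt T = deg T\<close>] by simp
  then have "wt L = 0" "deg L = 0" using part_in_0_wt_deg L by auto
  then show "deg (fst b) = 0" "WD n b = int n - 1" using \<open>k = 1\<close> by (simp_all add: bk WD_def)
qed

lemma lev_eq_ceil_div: "lev n p b = ceil_div (int n - 1) p * WD n b + int (deg (fst b)) - 1"
  by (simp add: lev_def h_def ceil_div_def)

lemma lev_bracket_le:
  assumes n: "3 \<le> n" and b: "b \<in> basis n" and b': "b' \<in> basis n"
    and WD: "WD n c + (int n - 1) = WD n b + WD n b'"
    and deg: "deg (fst c) + 1 = deg (fst b) + deg (fst b')"
    and WD0: "WD n b' = 0 \<Longrightarrow> deg (fst b) = 0 \<and> WD n b = int n - 1"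
    and p: "-1 \<le> p" "lev n p b \<le> p" and q: "-1 \<le> q" "lev n q b' \<le> q"
  shows "lev n (max p (q - 1)) c \<le> max p (q - 1)"
proof -
  have "ceil_div (int n - 1) (max p (q - 1)) * (WD n b + WD n b' - (int n - 1))
      + (int (deg (fst b)) + int (deg (fst b')) - 1) - 1 \<le> max p (q - 1)"
    by (rule level_merge)
      (use n p q WD0 basis_WD_bounds[OF b] basis_WD_bounds[OF b'] in \<open>auto simp: lev_eq_ceil_div\<close>)
  moreover have "int (deg (fst c)) = int (deg (fst b)) + int (deg (fst b')) - 1"
    using deg by (metis add_diff_cancel_right' of_nat_1 of_nat_add)
  moreover have "WD n c = WD n b + WD n b' - (int n - 1)" using WD by simp
  ultimately show ?thesis by (simp add: lev_eq_ceil_div)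
qed

lemma smult_delta_in_zspan: "b \<in> S \<Longrightarrow> (\<lambda>d. c * delta b d) \<in> zspan S"
  unfolding zspan_def by (intro CollectI exI[of _ "{b}"] exI[of _ "\<lambda>_. c"]) auto

theorem lemma3p1:
  fixes n :: nat and i j :: int and b b' :: bas
  assumes "n \<ge> 3" and "-1 \<le> i" and "i < j"
    and "b \<in> NN n i" and "b' \<in> NN n j"
  shows "bracket (delta b) (delta b') = (\<lambda>_. 0) \<or> bracket (delta b) (delta b') \<in> zspan (NN n (j - 1))"
proof (cases "br_basis b b' = (\<lambda>_. 0)")
  case False
  have b: "b \<in> basis n" and b': "b' \<in> basis n" using assms(4,5) unfolding NN_def by auto
  obtain p where p: "-1 \<le> p" "p \<le> i" "lev n p b \<le> p" using assms(4) unfolding NN_def by auto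
  obtain q where q: "-1 \<le> q" "q \<le> j" "lev n q b' \<le> q" using assms(5) unfolding NN_def by auto
  obtain c c0 where c: "br_basis b b' = (\<lambda>d. c * delta c0 d)" and c0: "c0 \<in> basis n"
    and WD: "WD n c0 + (int n - 1) = WD n b + WD n b'"
    and deg: "deg (fst c0) + 1 = deg (fst b) + deg (fst b')"
    using br_basis_single[OF b b' False] by blast
  have "lev n (max p (q - 1)) c0 \<le> max p (q - 1)"
    using lev_bracket_le[OF assms(1) b b' WD deg _ p(1,3) q(1,3)]
      br_basis_WD_eq_0[OF b b' False] by blast
  then have "c0 \<in> NN n (j - 1)"
    using c0 p q assms(3) unfolding NN_def by (intro CollectI conjI exI[of _ "max p (q - 1)"]) auto
  then show ?thesis by (simp add: bracket_delta c smult_delta_in_zspan)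
qed (simp add: bracket_delta)

end
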